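(* Let $\lambda>0$, $\mu>0$ and $0<b<a<1$, and set $\mu_1=\mu$, $\mu_2=a\mu$, $\mu_3=b\mu$. Consider the continuous-time Markov chain $\{(X(t),Y(t)),t\ge 0\}$ on the state space $\{(n,i): n\in\{0,1,2,\dots\},\ i\in\{1,2,3,4\}\}$ whose only transitions are: for $n\ge 1$ and $i\in\{1,2,3\}$, $(n,i)\to(n-1,i+1)$ at rate $\mu_i$ and $(n,i)\to(n+1,i+1)$ at rate $\lambda$; for $i\in\{1,2,3\}$, $(0,i)\to(1,i+1)$ at rate $\lambda$; for $n\ge 0$, $(n,4)\to(n+2,1)$ at rate $\lambda/2$. Define $$g(\lambda)=\frac{\frac{\mu}{\lambda+\mu}+\frac{a\mu}{\lambda+a\mu}+\frac{b\mu}{\lambda+b\mu}+0\cdot\frac{2}{\lambda}}{\frac{1}{\lambda+\mu}+\frac{1}{\lambda+a\mu}+\frac{1}{\lambda+b\mu}+\frac{2}{\lambda}}.$$ If $\lambda<g(\lambda)$, then the system is stable (i.e. the chain is positive recurrent on its recurrent states).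
   Context: This models a single-server queue where $X(t)$ is the number of customers and $Y(t)$ is the server's phase (efficiency level, phase 1 being the most efficient; phases 2, 3 are working vacations with reduced service rates and phase 4 is a regular vacation with no service during which the system waits for two arrivals, modeled as a single jump of $+2$ customers at rate $\lambda/2$). *)

theory Defs
  imports "HOL-Analysis.Analysis"
begin

text \<open>q s s' is the transition rate from s to s' (only s' \<noteq> s matters).\<close>

definition total_rate :: "('s \<Rightarrow> 's \<Rightarrow> real) \<Rightarrow> 's \<Rightarrow> real" where
  "total_rate q s = infsum (\<lambda>s'. q s s') (UNIV - {s})"

definition jump_prob :: "('s \<Rightarrow> 's \<Rightarrow> real) \<Rightarrow> 's \<Rightarrow> 's \<Rightarrow> real" where
  "jump_prob q s s' = (if s' = s then 0 else q s s' / total_rate q s)"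

fun path_prob :: "('s \<Rightarrow> 's \<Rightarrow> real) \<Rightarrow> 's list \<Rightarrow> real" where
  "path_prob q (x # y # zs) = jump_prob q x y * path_prob q (y # zs)"
| "path_prob q _ = 1"

text \<open>A state s is recurrent if, started in s, the chain returns to s with probability one.
  An excursion from s is the path s # ys @ [s] with s not in ys.\<close>
definition recurrent_state :: "('s \<Rightarrow> 's \<Rightarrow> real) \<Rightarrow> 's \<Rightarrow> bool" where
  "recurrent_state q s \<longleftrightarrow>
     ((\<lambda>ys. path_prob q (s # ys @ [s])) has_sum 1) {ys. s \<notin> set ys}"

text \<open>Expected return time: the sum over excursions of their probability times the
  expected total holding time (mean holding time in x is 1 / total rate).\<close>
definition positive_recurrent_state :: "('s \<Rightarrow> 's \<Rightarrow> real) \<Rightarrow> 's \<Rightarrow> bool" where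
  "positive_recurrent_state q s \<longleftrightarrow> recurrent_state q s \<and>
     (\<lambda>ys. path_prob q (s # ys @ [s]) * (\<Sum>x\<leftarrow>s # ys. 1 / total_rate q x))
        summable_on {ys. s \<notin> set ys}"

definition stable_on :: "('s \<Rightarrow> 's \<Rightarrow> real) \<Rightarrow> 's set \<Rightarrow> bool" where
  "stable_on q S \<longleftrightarrow> (\<exists>s\<in>S. positive_recurrent_state q s) \<and>
     (\<forall>s\<in>S. recurrent_state q s \<longrightarrow> positive_recurrent_state q s)"

definition state_space :: "(nat \<times> nat) set" where
  "state_space = {(n, i). 1 \<le> i \<and> i \<le> 4}"

definition phase_rate :: "real \<Rightarrow> real \<Rightarrow> real \<Rightarrow> nat \<Rightarrow> real" where
  "phase_rate mu a b i = (if i = 1 then mu else if i = 2 then a * mu else if i = 3 then b * mu else 0)"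

definition queue_rate :: "real \<Rightarrow> real \<Rightarrow> real \<Rightarrow> real \<Rightarrow> nat \<times> nat \<Rightarrow> nat \<times> nat \<Rightarrow> real" where
  "queue_rate lam mu a b s s' = (case s of (n, i) \<Rightarrow> case s' of (m, j) \<Rightarrow>
     (if i \<in> {1, 2, 3} \<and> j = i + 1 then
        (if n \<ge> 1 \<and> m = n - 1 then phase_rate mu a b i else 0)
      + (if m = n + 1 then lam else 0)
      else 0)
   + (if i = 4 \<and> j = 1 \<and> m = n + 2 then lam / 2 else 0))"

definition g_fun :: "real \<Rightarrow> real \<Rightarrow> real \<Rightarrow> real \<Rightarrow> real" where
  "g_fun mu a b lam =
     (mu / (lam + mu) + a * mu / (lam + a * mu) + b * mu / (lam + b * mu) + 0 * (2 / lam)) /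
     (1 / (lam + mu) + 1 / (lam + a * mu) + 1 / (lam + b * mu) + 2 / lam)"

end

theory Submission
  imports Defs
begin

text \<open>Foster's criterion for the embedded jump chain. During phases 1--3 a jump changes the
  queue length by -1 or +1 with probabilities mu_i/(lam + mu_i) and lam/(lam + mu_i), and the
  vacation adds 2 customers, so away from an empty queue one cycle of the server changes the
  queue length by cycle_drift on average; lam < g(lam) says exactly that cycle_drift < 0.
  A function w n + c_i of the state (n, i), with w = -4/cycle_drift and phase offsets c_i
  that telescope the phase drifts, then decreases by 1 in expectation at every jump outside
  the three states with an empty queue in phases 1--3. These states lead to every state other
  than (0,1), (1,1), (0,2), which are never re-entered, so the exceptional set can be moved
  into any single state s; a Foster function for {s} bounds the expected number of jumps of
  an excursion from s, and all mean holding times are at most 2/lam.\<close>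

locale locally_finite_ctmc =
  fixes q :: "'s \<Rightarrow> 's \<Rightarrow> real" and targets :: "'s \<Rightarrow> 's set"
  assumes finite_targets: "finite (targets x)"
    and self_notin_targets: "x \<notin> targets x"
    and rate_nonneg: "y \<noteq> x \<Longrightarrow> 0 \<le> q x y"
    and rate_notin_targets: "y \<noteq> x \<Longrightarrow> y \<notin> targets x \<Longrightarrow> q x y = 0"
begin

abbreviation P :: "'s \<Rightarrow> 's \<Rightarrow> real" where
  "P \<equiv> jump_prob q"

lemma total_rate_eq_sum: "total_rate q x = sum (q x) (targets x)"
proof -
  have "total_rate q x = infsum (q x) (targets x)"
    unfolding total_rate_def
    by (rule infsum_cong_neutral) (auto simp: rate_notin_targets self_notin_targets)
  then show ?thesis
    using finite_targets by simp
qed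

lemma total_rate_nonneg: "0 \<le> total_rate q x"
  unfolding total_rate_eq_sum using self_notin_targets
  by (intro sum_nonneg rate_nonneg) blast

lemma jump_prob_nonneg: "0 \<le> P x y"
  using rate_nonneg total_rate_nonneg by (simp add: jump_prob_def)

lemma jump_prob_notin_targets: "y \<notin> targets x \<Longrightarrow> P x y = 0"
  by (simp add: jump_prob_def rate_notin_targets)

lemma sum_jump_prob_mult:
  "(\<Sum>y\<in>targets x. P x y * f y) = (\<Sum>y\<in>targets x. q x y * f y) / total_rate q x"
proof -
  have "(\<Sum>y\<in>targets x. P x y * f y) = (\<Sum>y\<in>targets x. q x y * f y / total_rate q x)"
    using self_notin_targets by (intro sum.cong) (auto simp: jump_prob_def)
  then show ?thesis
    by (simp add: sum_divide_distrib)
qed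

lemma sum_jump_prob_le_1: "sum (P x) (targets x) \<le> 1"
  using sum_jump_prob_mult[of x "\<lambda>_. 1"] total_rate_nonneg[of x]
  by (simp add: total_rate_eq_sum divide_le_eq_1)

lemma sum_jump_prob_eq_1: "0 < total_rate q x \<Longrightarrow> sum (P x) (targets x) = 1"
  using sum_jump_prob_mult[of x "\<lambda>_. 1"] by (simp add: total_rate_eq_sum)

lemma sum_jump_prob_remove: "sum (P x) (targets x) = P x s + sum (P x) (targets x - {s})"
  by (cases "s \<in> targets x") (simp_all add: sum.remove finite_targets jump_prob_notin_targets)

lemma sum_jump_prob_mult_mono:
  assumes "finite B" and "\<And>y. 0 \<le> f y"
  shows "(\<Sum>y\<in>B. P x y * f y) \<le> (\<Sum>y\<in>targets x. P x y * f y)"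
proof -
  have "(\<Sum>y\<in>B. P x y * f y) = (\<Sum>y\<in>B \<inter> targets x. P x y * f y)"
    using assms(1) by (intro sum.mono_neutral_right) (auto simp: jump_prob_notin_targets)
  also have "\<dots> \<le> (\<Sum>y\<in>targets x. P x y * f y)"
    using finite_targets assms(2) by (intro sum_mono2) (auto simp: jump_prob_nonneg)
  finally show ?thesis .
qed

lemma jump_prob_pos_iff: "0 < P x y \<longleftrightarrow> y \<noteq> x \<and> 0 < q x y"
proof (cases "y \<noteq> x \<and> 0 < q x y")
  case True
  then have "y \<in> targets x"
    using rate_notin_targets by force
  then have "q x y \<le> total_rate q x"
    unfolding total_rate_eq_sum using finite_targets self_notin_targets
    by (intro member_le_sum) (auto intro: rate_nonneg)
  then show ?thesis
    using True by (simp add: jump_prob_def)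
next
  case False
  then show ?thesis
    using rate_nonneg[of y x] by (auto simp: jump_prob_def)
qed

lemma path_prob_nonneg: "0 \<le> path_prob q xs"
  by (induction xs rule: induct_list012) (simp_all add: jump_prob_nonneg)

definition edge :: "'s \<Rightarrow> 's \<Rightarrow> bool" where
  "edge x y \<longleftrightarrow> 0 < P x y"

lemma edge_iff: "edge x y \<longleftrightarrow> y \<noteq> x \<and> 0 < q x y"
  by (simp add: edge_def jump_prob_pos_iff)

definition foster_function :: "'s set \<Rightarrow> ('s \<Rightarrow> real) \<Rightarrow> bool" where
  "foster_function A W \<longleftrightarrow>
     (\<forall>x. 0 \<le> W x) \<and> (\<forall>x. x \<notin> A \<longrightarrow> 1 + (\<Sum>y\<in>targets x. P x y * W y) \<le> W x)"

lemma foster_function_mono: "foster_function A W \<Longrightarrow> A \<subseteq> B \<Longrightarrow> foster_function B W"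
  unfolding foster_function_def by blast

text \<open>To release a state a from the exceptional set at the price of adding a successor b,
  shift U up by a constant K everywhere except at b: K is chosen so large that the
  probability P a b of dropping by K restores the drift condition at a.\<close>

lemma foster_function_edge:
  assumes U: "foster_function A U" and "edge a b"
  shows "\<exists>W. foster_function (insert b (A - {a})) W"
proof -
  define K where "K = max 0 ((1 + (\<Sum>y\<in>targets a. P a y * U y) - U a) / P a b)"
  define W where "W = (\<lambda>x. if x = b then 0 else U x + K)"
  have U_nonneg: "0 \<le> U x" for x
    using U by (simp add: foster_function_def)
  have "0 < P a b"
    using \<open>edge a b\<close> by (simp add: edge_def)
  have K: "0 \<le> K" "1 + (\<Sum>y\<in>targets a. P a y * U y) - U a \<le> K * P a b"
  proof -
    show "0 \<le> K"
      by (simp add: K_def)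
    have "1 + (\<Sum>y\<in>targets a. P a y * U y) - U a
        = (1 + (\<Sum>y\<in>targets a. P a y * U y) - U a) / P a b * P a b"
      using \<open>0 < P a b\<close> by simp
    also have "\<dots> \<le> K * P a b"
      unfolding K_def using \<open>0 < P a b\<close> by (intro mult_right_mono) auto
    finally show "1 + (\<Sum>y\<in>targets a. P a y * U y) - U a \<le> K * P a b" .
  qed
  have W_drift: "(\<Sum>y\<in>targets x. P x y * W y) \<le> (\<Sum>y\<in>targets x. P x y * U y) + K * (1 - P x b)"
    for x
  proof -
    have "(\<Sum>y\<in>targets x. P x y * W y)
        \<le> (\<Sum>y\<in>targets x. P x y * U y + K * P x y - (if y = b then K * P x b else 0))"
      using U_nonneg jump_prob_nonneg[of x] by (intro sum_mono) (auto simp: W_def algebra_simps)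
    also have "\<dots> = (\<Sum>y\<in>targets x. P x y * U y) + K * sum (P x) (targets x) - K * P x b"
      using finite_targets[of x] jump_prob_notin_targets[of b x]
      by (auto simp: sum.distrib sum_subtractf sum_distrib_left)
    also have "\<dots> \<le> (\<Sum>y\<in>targets x. P x y * U y) + K * (1 - P x b)"
      using mult_left_mono[OF sum_jump_prob_le_1 K(1)] by (simp add: algebra_simps)
    finally show ?thesis .
  qed
  have "foster_function (insert b (A - {a})) W"
    unfolding foster_function_def
  proof (intro conjI allI impI)
    show "0 \<le> W x" for x
      using U_nonneg K by (simp add: W_def)
  next
    fix x
    assume x: "x \<notin> insert b (A - {a})"
    show "1 + (\<Sum>y\<in>targets x. P x y * W y) \<le> W x"
    proof (cases "x = a")
      case True
      then show ?thesis
        using x W_drift[of a] K(2) by (simp add: W_def algebra_simps)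
    next
      case False
      then have "1 + (\<Sum>y\<in>targets x. P x y * U y) \<le> U x"
        using U x by (simp add: foster_function_def)
      moreover have "K * (1 - P x b) \<le> K"
        using K(1) jump_prob_nonneg[of x b] by (simp add: algebra_simps)
      ultimately show ?thesis
        using x W_drift[of x] by (simp add: W_def)
    qed
  qed
  then show ?thesis by blast
qed

lemma foster_function_path:
  assumes "edge\<^sup>*\<^sup>* a s" and "foster_function A U"
  shows "\<exists>W. foster_function (insert s (A - {a})) W"
  using assms
proof (induction arbitrary: A U rule: converse_rtranclp_induct)
  case base
  then have "foster_function (insert s (A - {s})) U"
    by (rule foster_function_mono) blast
  then show ?case by blast
next
  case (step a b)
  obtain V where "foster_function (insert b (A - {a})) V"
    using foster_function_edge step.prems step.hyps(1) by blast
  then obtain W where "foster_function (insert s (insert b (A - {a}) - {b})) W"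
    using step.IH by blast
  then have "foster_function (insert s (A - {a})) W"
    by (rule foster_function_mono) auto
  then show ?case by blast
qed

lemma foster_function_singleton:
  assumes "finite A" and "foster_function A U" and "\<And>a. a \<in> A \<Longrightarrow> edge\<^sup>*\<^sup>* a s"
  shows "\<exists>W. foster_function {s} W"
proof -
  have "foster_function (insert s A) U"
    using assms(2) by (rule foster_function_mono) auto
  with assms(1,3) show ?thesis
  proof (induction A arbitrary: U rule: finite_induct)
    case empty
    then show ?case by blast
  next
    case (insert a A)
    obtain W where "foster_function (insert s (insert s (insert a A) - {a})) W"
      using foster_function_path[OF _ insert.prems(2)] insert.prems(1) by blast
    then have "foster_function (insert s A) W"
      by (rule foster_function_mono) auto
    then show ?case
      using insert.IH insert.prems(1) by blast
  qed
qed

fun hitting_paths :: "'s \<Rightarrow> nat \<Rightarrow> 's \<Rightarrow> 's list set" where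
  "hitting_paths s 0 x = {}"
| "hitting_paths s (Suc k) x = insert [] (\<Union>y\<in>targets x - {s}. Cons y ` hitting_paths s k y)"

lemma finite_hitting_paths: "finite (hitting_paths s k x)"
  by (induction k arbitrary: x) (simp_all add: finite_targets)

lemma hitting_paths_avoid: "ys \<in> hitting_paths s k x \<Longrightarrow> s \<notin> set ys"
  by (induction k arbitrary: x ys) auto

lemma sum_hitting_paths_Suc:
  "(\<Sum>ys\<in>hitting_paths s (Suc k) x. g ys)
     = g [] + (\<Sum>y\<in>targets x - {s}. \<Sum>ys\<in>hitting_paths s k y. g (y # ys))"
proof -
  have finite: "finite (\<Union>y\<in>targets x - {s}. Cons y ` hitting_paths s k y)"
    by (simp add: finite_targets finite_hitting_paths)
  have Nil: "[] \<notin> (\<Union>y\<in>targets x - {s}. Cons y ` hitting_paths s k y)"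
    by (simp add: image_iff)
  have "(\<Sum>ys\<in>hitting_paths s (Suc k) x. g ys)
      = g [] + (\<Sum>y\<in>targets x - {s}. sum g (Cons y ` hitting_paths s k y))"
    unfolding hitting_paths.simps sum.insert[OF finite Nil]
    using finite_targets finite_hitting_paths by (subst sum.UNION_disjoint) auto
  also have "\<dots> = g [] + (\<Sum>y\<in>targets x - {s}. \<Sum>ys\<in>hitting_paths s k y. g (y # ys))"
    by (simp add: sum.reindex)
  finally show ?thesis .
qed

lemma path_prob_notin_hitting_paths:
  assumes "s \<notin> set ys" and "length ys < k" and "ys \<notin> hitting_paths s k x"
  shows "path_prob q (x # ys @ [s]) = 0"
  using assms
proof (induction ys arbitrary: x k)
  case Nil
  then show ?case
    by (cases k) auto
next
  case (Cons y ys)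
  then obtain k' where k: "k = Suc k'"
    by (cases k) auto
  show ?case
  proof (cases "y \<in> targets x")
    case True
    then have "ys \<notin> hitting_paths s k' y"
      using Cons.prems by (auto simp: k)
    then show ?thesis
      using Cons.IH[of k' y] Cons.prems by (simp add: k)
  next
    case False
    then show ?thesis
      by (simp add: jump_prob_notin_targets)
  qed
qed

lemma sum_le_sum_hitting_paths:
  assumes "finite F" and "F \<subseteq> {ys. s \<notin> set ys}" and "\<And>ys. 0 \<le> g ys"
  shows "\<exists>k. (\<Sum>ys\<in>F. path_prob q (x # ys @ [s]) * g ys)
    \<le> (\<Sum>ys\<in>hitting_paths s k x. path_prob q (x # ys @ [s]) * g ys)"
proof -
  obtain k where k: "\<forall>ys\<in>F. length ys < k"
    using assms(1) finite_nat_set_iff_bounded[of "length ` F"] by auto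
  have "path_prob q (x # ys @ [s]) * g ys = 0" if "ys \<in> F - F \<inter> hitting_paths s k x" for ys
  proof -
    have "s \<notin> set ys" "length ys < k" "ys \<notin> hitting_paths s k x"
      using that assms(2) k by auto
    then show ?thesis
      by (simp add: path_prob_notin_hitting_paths)
  qed
  then have "(\<Sum>ys\<in>F. path_prob q (x # ys @ [s]) * g ys)
      = (\<Sum>ys\<in>F \<inter> hitting_paths s k x. path_prob q (x # ys @ [s]) * g ys)"
    using assms(1) by (intro sum.mono_neutral_right) auto
  also have "\<dots> \<le> (\<Sum>ys\<in>hitting_paths s k x. path_prob q (x # ys @ [s]) * g ys)"
    using assms(3) finite_hitting_paths path_prob_nonneg
    by (intro sum_mono2) (auto intro: mult_nonneg_nonneg)
  finally show ?thesis ..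
qed

lemma sum_hitting_paths_prob_Suc:
  "(\<Sum>ys\<in>hitting_paths s (Suc k) x. path_prob q (x # ys @ [s]))
     = P x s + (\<Sum>y\<in>targets x - {s}. P x y * (\<Sum>ys\<in>hitting_paths s k y. path_prob q (y # ys @ [s])))"
  unfolding sum_hitting_paths_Suc by (simp add: sum_distrib_left)

lemma sum_hitting_paths_prob_le_1: "(\<Sum>ys\<in>hitting_paths s k x. path_prob q (x # ys @ [s])) \<le> 1"
proof (induction k arbitrary: x)
  case 0
  then show ?case by simp
next
  case (Suc k)
  have "(\<Sum>ys\<in>hitting_paths s (Suc k) x. path_prob q (x # ys @ [s]))
      \<le> P x s + (\<Sum>y\<in>targets x - {s}. P x y * 1)"
    unfolding sum_hitting_paths_prob_Suc
    by (intro add_left_mono sum_mono mult_left_mono Suc.IH jump_prob_nonneg)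
  also have "\<dots> \<le> 1"
    using sum_jump_prob_le_1[of x] sum_jump_prob_remove[of x s] by simp
  finally show ?case .
qed

text \<open>avoid_prob s k x is the probability that none of the first k jumps from x lands in s;
  its partial sums over k are truncated expected hitting times of s.\<close>

fun avoid_prob :: "'s \<Rightarrow> nat \<Rightarrow> 's \<Rightarrow> real" where
  "avoid_prob s 0 x = 1"
| "avoid_prob s (Suc k) x = (\<Sum>y\<in>targets x - {s}. P x y * avoid_prob s k y)"

lemma avoid_prob_Suc_le: "avoid_prob s (Suc k) x \<le> avoid_prob s k x"
proof (induction k arbitrary: x)
  case 0
  have "sum (P x) (targets x - {s}) \<le> 1"
    using sum_jump_prob_le_1[of x] sum_jump_prob_remove[of x s] jump_prob_nonneg[of x s] by simp
  then show ?case by simp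
next
  case (Suc k)
  have "avoid_prob s (Suc (Suc k)) x = (\<Sum>y\<in>targets x - {s}. P x y * avoid_prob s (Suc k) y)"
    by (rule avoid_prob.simps(2))
  also have "\<dots> \<le> (\<Sum>y\<in>targets x - {s}. P x y * avoid_prob s k y)"
    by (intro sum_mono mult_left_mono Suc.IH jump_prob_nonneg)
  finally show ?case
    by simp
qed

lemma avoid_prob_antimono: "k \<le> m \<Longrightarrow> avoid_prob s m x \<le> avoid_prob s k x"
  by (rule lift_Suc_antimono_le[of "\<lambda>k. avoid_prob s k x"]) (rule avoid_prob_Suc_le)

lemma sum_avoid_prob_Suc:
  "(\<Sum>j<Suc N. avoid_prob s j x) = 1 + (\<Sum>y\<in>targets x - {s}. P x y * (\<Sum>j<N. avoid_prob s j y))"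
proof -
  have "(\<Sum>j<N. avoid_prob s (Suc j) x) = (\<Sum>y\<in>targets x - {s}. P x y * (\<Sum>j<N. avoid_prob s j y))"
    by (simp add: sum_distrib_left sum.swap[of _ "{..<N}"])
  then show ?thesis
    by (simp add: sum.lessThan_Suc_shift del: sum.lessThan_Suc)
qed

lemma sum_avoid_prob_le:
  assumes W: "foster_function {s} W" and "x \<noteq> s"
  shows "(\<Sum>j<N. avoid_prob s j x) \<le> W x"
  using \<open>x \<noteq> s\<close>
proof (induction N arbitrary: x)
  case 0
  then show ?case
    using W by (simp add: foster_function_def)
next
  case (Suc N)
  have W_nonneg: "0 \<le> W y" for y
    using W by (simp add: foster_function_def)
  have "(\<Sum>j<Suc N. avoid_prob s j x) \<le> 1 + (\<Sum>y\<in>targets x - {s}. P x y * W y)"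
    unfolding sum_avoid_prob_Suc
    by (intro add_left_mono sum_mono mult_left_mono Suc.IH jump_prob_nonneg) auto
  also have "\<dots> \<le> 1 + (\<Sum>y\<in>targets x. P x y * W y)"
    using finite_targets W_nonneg by (intro add_left_mono sum_jump_prob_mult_mono) auto
  also have "\<dots> \<le> W x"
    using W Suc.prems by (simp add: foster_function_def)
  finally show ?case .
qed

lemma avoid_prob_le:
  assumes W: "foster_function {s} W"
  shows "avoid_prob s N s \<le> (1 + (\<Sum>y\<in>targets s. P s y * W y)) / Suc N"
proof -
  have W_nonneg: "0 \<le> W y" for y
    using W by (simp add: foster_function_def)
  have "real (Suc N) * avoid_prob s N s = (\<Sum>j<Suc N. avoid_prob s N s)"
    by simp
  also have "\<dots> \<le> (\<Sum>j<Suc N. avoid_prob s j s)"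
    by (intro sum_mono avoid_prob_antimono) auto
  also have "\<dots> \<le> 1 + (\<Sum>y\<in>targets s - {s}. P s y * W y)"
    unfolding sum_avoid_prob_Suc using sum_avoid_prob_le[OF W]
    by (intro add_left_mono sum_mono mult_left_mono jump_prob_nonneg) auto
  also have "\<dots> \<le> 1 + (\<Sum>y\<in>targets s. P s y * W y)"
    using finite_targets W_nonneg by (intro add_left_mono sum_jump_prob_mult_mono) auto
  finally show ?thesis
    by (simp add: field_simps)
qed

lemma sum_hitting_paths_prob:
  assumes "\<And>x. x \<in> S \<Longrightarrow> 0 < total_rate q x" and "\<And>x. x \<in> S \<Longrightarrow> targets x \<subseteq> S"
    and "x \<in> S"
  shows "(\<Sum>ys\<in>hitting_paths s k x. path_prob q (x # ys @ [s])) = 1 - avoid_prob s k x"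
  using \<open>x \<in> S\<close>
proof (induction k arbitrary: x)
  case 0
  then show ?case by simp
next
  case (Suc k)
  have "(\<Sum>ys\<in>hitting_paths s (Suc k) x. path_prob q (x # ys @ [s]))
      = P x s + (\<Sum>y\<in>targets x - {s}. P x y * (1 - avoid_prob s k y))"
    unfolding sum_hitting_paths_prob_Suc using Suc.IH assms(2)[OF Suc.prems]
    by (intro arg_cong2[where f = "(+)"] sum.cong) auto
  also have "\<dots> = sum (P x) (targets x) - avoid_prob s (Suc k) x"
    by (simp add: sum_jump_prob_remove[of x s] right_diff_distrib sum_subtractf)
  finally show ?case
    using sum_jump_prob_eq_1[OF assms(1)[OF Suc.prems]] by simp
qed

lemma sum_hitting_paths_cost_Suc:
  "(\<Sum>ys\<in>hitting_paths s (Suc k) x. path_prob q (x # ys @ [s]) * sum_list (map c (x # ys)))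
     = c x * (\<Sum>ys\<in>hitting_paths s (Suc k) x. path_prob q (x # ys @ [s]))
       + (\<Sum>y\<in>targets x - {s}. P x y *
           (\<Sum>ys\<in>hitting_paths s k y. path_prob q (y # ys @ [s]) * sum_list (map c (y # ys))))"
proof -
  have "(\<Sum>ys\<in>hitting_paths s (Suc k) x. path_prob q (x # ys @ [s]) * sum_list (map c ys))
      = (\<Sum>y\<in>targets x - {s}. P x y *
           (\<Sum>ys\<in>hitting_paths s k y. path_prob q (y # ys @ [s]) * sum_list (map c (y # ys))))"
    unfolding sum_hitting_paths_Suc by (simp add: sum_distrib_left mult.assoc)
  then show ?thesis
    by (simp add: sum.distrib sum_distrib_left algebra_simps)
qed

lemma sum_hitting_paths_cost_le:
  assumes W: "foster_function {s} W" and c: "\<And>x. 0 \<le> c x" "\<And>x. c x \<le> c0"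
  shows "(\<Sum>ys\<in>hitting_paths s k x. path_prob q (x # ys @ [s]) * sum_list (map c (x # ys)))
    \<le> c0 * (1 + (\<Sum>y\<in>targets x. P x y * W y))"
proof (induction k arbitrary: x)
  case 0
  have "0 \<le> (\<Sum>y\<in>targets x. P x y * W y)"
    using W by (intro sum_nonneg mult_nonneg_nonneg jump_prob_nonneg) (simp add: foster_function_def)
  moreover have "0 \<le> c0"
    using c[of x] by linarith
  ultimately show ?case by simp
next
  case (Suc k)
  have W_nonneg: "0 \<le> W y" for y
    using W by (simp add: foster_function_def)
  have IH': "(\<Sum>ys\<in>hitting_paths s k y. path_prob q (y # ys @ [s]) * sum_list (map c (y # ys)))
      \<le> c0 * W y" if "y \<in> targets x - {s}" for y
  proof -
    have "c0 * (1 + (\<Sum>z\<in>targets y. P y z * W z)) \<le> c0 * W y"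
      using that W c[of x] by (intro mult_left_mono) (auto simp: foster_function_def)
    then show ?thesis
      using Suc.IH[of y] by linarith
  qed
  have "(\<Sum>ys\<in>hitting_paths s (Suc k) x. path_prob q (x # ys @ [s]) * sum_list (map c (x # ys)))
      \<le> c0 * 1 + (\<Sum>y\<in>targets x - {s}. P x y * (c0 * W y))"
    unfolding sum_hitting_paths_cost_Suc
  proof (intro add_mono sum_mono mult_left_mono mult_mono)
    show "(\<Sum>ys\<in>hitting_paths s (Suc k) x. path_prob q (x # ys @ [s])) \<le> 1"
      by (rule sum_hitting_paths_prob_le_1)
  qed (use c[of x] IH' in \<open>auto intro: sum_nonneg path_prob_nonneg jump_prob_nonneg\<close>)
  also have "\<dots> \<le> c0 * (1 + (\<Sum>y\<in>targets x. P x y * W y))"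
    unfolding mult.left_commute[of _ c0] sum_distrib_left[symmetric] distrib_left
    using c[of x] W_nonneg finite_targets
    by (intro add_left_mono mult_left_mono sum_jump_prob_mult_mono) auto
  finally show ?case .
qed

lemma return_prob_has_sum_1:
  assumes W: "foster_function {s} W" and "s \<in> S"
    and "\<And>x. x \<in> S \<Longrightarrow> 0 < total_rate q x" and "\<And>x. x \<in> S \<Longrightarrow> targets x \<subseteq> S"
  shows "((\<lambda>ys. path_prob q (s # ys @ [s])) has_sum 1) {ys. s \<notin> set ys}"
proof -
  let ?p = "\<lambda>ys. path_prob q (s # ys @ [s])"
  have finite_sums: "sum ?p F \<le> 1" if F: "finite F" "F \<subseteq> {ys. s \<notin> set ys}" for F
  proof -
    obtain k where "(\<Sum>ys\<in>F. ?p ys * 1) \<le> (\<Sum>ys\<in>hitting_paths s k s. ?p ys * 1)"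
      using sum_le_sum_hitting_paths[OF F zero_le_one] by blast
    then show ?thesis
      using sum_hitting_paths_prob_le_1[where s = s and k = k and x = s] by simp
  qed
  have summable: "?p summable_on {ys. s \<notin> set ys}"
    using finite_sums path_prob_nonneg
    by (intro nonneg_bdd_above_summable_on bdd_aboveI2[where M = 1]) auto
  have "1 \<le> infsum ?p {ys. s \<notin> set ys}"
  proof (rule field_le_epsilon)
    fix e :: real
    assume "0 < e"
    define B where "B = 1 + (\<Sum>y\<in>targets s. P s y * W y)"
    obtain N :: nat where "B / e < N"
      using reals_Archimedean2 by blast
    then have "B / Suc N \<le> e"
      using \<open>0 < e\<close> by (simp add: field_simps)
    then have "avoid_prob s N s \<le> e"
      using avoid_prob_le[OF W, of N] by (simp add: B_def)
    moreover have "1 - avoid_prob s N s = (\<Sum>ys\<in>hitting_paths s N s. ?p ys)"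
      using sum_hitting_paths_prob[OF assms(3,4,2)] by simp
    moreover have "\<dots> \<le> infsum ?p {ys. s \<notin> set ys}"
      using summable finite_hitting_paths hitting_paths_avoid path_prob_nonneg
      by (intro finite_sum_le_infsum) auto
    ultimately show "1 \<le> infsum ?p {ys. s \<notin> set ys} + e"
      by linarith
  qed
  moreover have "infsum ?p {ys. s \<notin> set ys} \<le> 1"
    using summable finite_sums by (rule infsum_le_finite_sums)
  ultimately show ?thesis
    using summable by (simp add: has_sum_iff)
qed

lemma excursion_cost_summable:
  assumes W: "foster_function {s} W" and c: "\<And>x. 0 \<le> c x" "\<And>x. c x \<le> c0"
  shows "(\<lambda>ys. path_prob q (s # ys @ [s]) * sum_list (map c (s # ys))) summable_on {ys. s \<notin> set ys}"
proof (rule nonneg_bdd_above_summable_on)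
  show "0 \<le> path_prob q (s # ys @ [s]) * sum_list (map c (s # ys))" for ys
    using path_prob_nonneg c by (intro mult_nonneg_nonneg sum_list_nonneg) auto
  show "bdd_above ((\<lambda>F. \<Sum>ys\<in>F. path_prob q (s # ys @ [s]) * sum_list (map c (s # ys))) `
      {F. F \<subseteq> {ys. s \<notin> set ys} \<and> finite F})"
  proof (rule bdd_aboveI2)
    fix F
    assume "F \<in> {F. F \<subseteq> {ys. s \<notin> set ys} \<and> finite F}"
    then have F: "finite F" "F \<subseteq> {ys. s \<notin> set ys}"
      by auto
    have "0 \<le> sum_list (map c (s # ys))" for ys
      using c(1) by (intro sum_list_nonneg) auto
    then obtain k where "(\<Sum>ys\<in>F. path_prob q (s # ys @ [s]) * sum_list (map c (s # ys)))
        \<le> (\<Sum>ys\<in>hitting_paths s k s. path_prob q (s # ys @ [s]) * sum_list (map c (s # ys)))"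
      using sum_le_sum_hitting_paths[OF F, where g = "\<lambda>ys. sum_list (map c (s # ys))" and x = s]
      by blast
    also have "\<dots> \<le> c0 * (1 + (\<Sum>y\<in>targets s. P s y * W y))"
      by (rule sum_hitting_paths_cost_le[OF W c])
    finally show "(\<Sum>ys\<in>F. path_prob q (s # ys @ [s]) * sum_list (map c (s # ys)))
        \<le> c0 * (1 + (\<Sum>y\<in>targets s. P s y * W y))" .
  qed
qed

lemma positive_recurrent_state_if_foster_function:
  assumes "foster_function {s} W" and "s \<in> S"
    and "\<And>x. x \<in> S \<Longrightarrow> 0 < total_rate q x" and "\<And>x. x \<in> S \<Longrightarrow> targets x \<subseteq> S"
    and "\<And>x. 1 / total_rate q x \<le> c0"
  shows "positive_recurrent_state q s"
  unfolding positive_recurrent_state_def recurrent_state_def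
  using return_prob_has_sum_1[OF assms(1-4)] excursion_cost_summable[OF assms(1) _ assms(5)]
  by (simp add: total_rate_nonneg)

end

lemma path_prob_eq_0_if_enters:
  assumes "t \<in> set (tl xs)" and "\<And>z. z \<in> set xs \<Longrightarrow> jump_prob q z t = 0"
  shows "path_prob q xs = 0"
  using assms
proof (induction xs rule: induct_list012)
  case (3 x y zs)
  show ?case
  proof (cases "y = t")
    case True
    then show ?thesis
      using "3.prems"(2)[of x] by simp
  next
    case False
    then have "path_prob q (y # zs) = 0"
      using "3.prems" by (intro "3.IH"(2)) auto
    then show ?thesis
      by simp
  qed
qed simp_all

text \<open>For n = 0 the service target (n - 1, i + 1) is (0, i + 1), which carries rate 0.\<close>

definition queue_targets :: "nat \<times> nat \<Rightarrow> (nat \<times> nat) set" where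
  "queue_targets = (\<lambda>(n, i).
     if i \<in> {1, 2, 3} then {(n - 1, i + 1), (n + 1, i + 1)} else if i = 4 then {(n + 2, 1)} else {})"

text \<open>Phase 1 is only entered with at least two customers, so (0, 1) and (1, 1) are never
  entered, and (0, 2) is entered only from (1, 1).\<close>

definition transient_states :: "(nat \<times> nat) set" where
  "transient_states = {(0, 1), (1, 1), (0, 2)}"

locale queue =
  fixes lam mu a b :: real
  assumes lam_pos: "0 < lam" and mu_pos: "0 < mu" and a_pos: "0 < a" and b_pos: "0 < b"
begin

abbreviation service_rate :: "nat \<Rightarrow> real" where
  "service_rate \<equiv> phase_rate mu a b"

lemma service_rate_nonneg: "0 \<le> service_rate i"
  using mu_pos a_pos b_pos by (simp add: phase_rate_def)

lemma service_rate_pos: "i \<in> {1, 2, 3} \<Longrightarrow> 0 < service_rate i"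
  using mu_pos a_pos b_pos by (auto simp: phase_rate_def)

sublocale locally_finite_ctmc "queue_rate lam mu a b" queue_targets
proof
  show "finite (queue_targets x)" for x
    by (cases x) (simp add: queue_targets_def)
  show "x \<notin> queue_targets x" for x
    by (cases x) (auto simp: queue_targets_def)
  show "0 \<le> queue_rate lam mu a b x y" for x y
    using lam_pos service_rate_nonneg by (cases x; cases y) (simp add: queue_rate_def)
  show "queue_rate lam mu a b x y = 0" if "y \<notin> queue_targets x" for x y
    using that by (cases x; cases y) (auto simp: queue_rate_def queue_targets_def)
qed

lemma sum_queue_rate_mult:
  "(\<Sum>y\<in>queue_targets (n, i). queue_rate lam mu a b (n, i) y * f y) =
     (if i \<in> {1, 2, 3}
      then (if 1 \<le> n then service_rate i * f (n - 1, i + 1) else 0) + lam * f (n + 1, i + 1)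
      else if i = 4 then lam / 2 * f (n + 2, 1) else 0)"
proof (cases "i \<in> {1, 2, 3}")
  case True
  have "(n - 1, i + 1) \<noteq> (n + 1, i + 1)"
    by simp
  then show ?thesis
    using True by (auto simp: queue_targets_def queue_rate_def)
next
  case False
  then show ?thesis
    by (auto simp: queue_targets_def queue_rate_def)
qed

lemma total_rate_queue:
  "total_rate (queue_rate lam mu a b) (n, i) =
     (if i \<in> {1, 2, 3} then (if 1 \<le> n then service_rate i else 0) + lam
      else if i = 4 then lam / 2 else 0)"
  using sum_queue_rate_mult[of n i "\<lambda>_. 1"] by (simp add: total_rate_eq_sum)

lemma total_rate_queue_pos: "x \<in> state_space \<Longrightarrow> 0 < total_rate (queue_rate lam mu a b) x"
  using lam_pos
  by (cases x) (auto simp: total_rate_queue state_space_def intro: add_nonneg_pos service_rate_nonneg)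

lemma inverse_total_rate_queue_le: "1 / total_rate (queue_rate lam mu a b) x \<le> 2 / lam"
proof (cases x)
  case (Pair n i)
  have "lam / 2 \<le> total_rate (queue_rate lam mu a b) x \<or> total_rate (queue_rate lam mu a b) x = 0"
    using lam_pos service_rate_nonneg[of i] by (auto simp: Pair total_rate_queue)
  then show ?thesis
    using lam_pos by (auto simp: field_simps)
qed

lemma queue_targets_state_space: "x \<in> state_space \<Longrightarrow> queue_targets x \<subseteq> state_space"
  by (cases x) (auto simp: queue_targets_def state_space_def)

lemma edge_arrival: "i \<in> {1, 2, 3} \<Longrightarrow> edge (n, i) (n + 1, i + 1)"
  using lam_pos by (auto simp: edge_iff queue_rate_def)

lemma edge_service: "i \<in> {1, 2, 3} \<Longrightarrow> 1 \<le> n \<Longrightarrow> edge (n, i) (n - 1, i + 1)"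
  using lam_pos service_rate_pos[of i] by (auto simp: edge_iff queue_rate_def)

lemma edge_vacation: "edge (n, 4) (n + 2, 1)"
  using lam_pos by (simp add: edge_iff queue_rate_def)

lemma reaches_next_level:
  assumes "1 \<le> n"
  shows "edge\<^sup>*\<^sup>* (n, 1) (n + 1, 1)"
proof -
  have "edge (n, 1) (n + 1, 2)"
    using edge_arrival[of 1 n] by (simp add: eval_nat_numeral)
  moreover have "edge (n + 1, 2) (n, 3)"
    using edge_service[of 2 "n + 1"] by (simp add: eval_nat_numeral)
  moreover have "edge (n, 3) (n - 1, 4)"
    using edge_service[of 3 n] assms by (simp add: eval_nat_numeral)
  moreover have "edge (n - 1, 4) (n + 1, 1)"
    using edge_vacation[of "n - 1"] assms by simp
  ultimately show ?thesis
    by (meson converse_rtranclp_into_rtranclp rtranclp.rtrancl_refl)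
qed

lemma reaches_from_2_1:
  assumes "x \<in> state_space - transient_states"
  shows "edge\<^sup>*\<^sup>* (2, 1) x"
proof -
  have phase1: "edge\<^sup>*\<^sup>* (2, 1) (n, 1)" if "2 \<le> n" for n
    using that
  proof (induction rule: dec_induct)
    case (step n)
    then show ?case
      using reaches_next_level[of n] by simp
  qed simp
  have phase2: "edge\<^sup>*\<^sup>* (2, 1) (n, 2)" if "1 \<le> n" for n
    using phase1[of "n + 1"] edge_service[of 1 "n + 1"] that
    by (simp add: eval_nat_numeral rtranclp.rtrancl_into_rtrancl)
  have phase3: "edge\<^sup>*\<^sup>* (2, 1) (n, 3)" for n
    using phase2[of "n + 1"] edge_service[of 2 "n + 1"]
    by (simp add: eval_nat_numeral rtranclp.rtrancl_into_rtrancl)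
  have phase4: "edge\<^sup>*\<^sup>* (2, 1) (n, 4)" for n
    using phase3[of "n + 1"] edge_service[of 3 "n + 1"]
    by (simp add: eval_nat_numeral rtranclp.rtrancl_into_rtrancl)
  obtain n i where x: "x = (n, i)"
    by (cases x)
  then have "i = 1 \<and> 2 \<le> n \<or> i = 2 \<and> 1 \<le> n \<or> i = 3 \<or> i = 4"
    using assms by (auto simp: state_space_def transient_states_def)
  then show ?thesis
    using phase1 phase2 phase3 phase4 x by auto
qed

lemma boundary_reaches_2_1:
  assumes "x \<in> {0} \<times> {1, 2, 3}"
  shows "edge\<^sup>*\<^sup>* x (2, 1)"
proof -
  have "edge (0, 1) (1, 2)" "edge (1, 2) (0, 3)" "edge (0, 2) (1, 3)" "edge (1, 3) (0, 4)"
    "edge (0, 3) (1, 4)" "edge (1, 4) (3, 1)" "edge (3, 1) (2, 2)" "edge (2, 2) (1, 3)"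
    "edge (0, 4) (2, 1)"
    using edge_arrival[of _ 0] edge_service[of _ 1] edge_service[of _ 2] edge_service[of 1 3]
      edge_vacation[of 0] edge_vacation[of 1]
    by (simp_all add: numeral_eq_Suc)
  then show ?thesis
    using assms by (auto intro: converse_rtranclp_into_rtranclp)
qed

lemma not_recurrent_transient_state:
  assumes "s \<in> transient_states"
  shows "\<not> recurrent_state (queue_rate lam mu a b) s"
proof -
  have no_entry: "P z (n, 1) = 0" if "n < 2" for z n
    using that by (cases z) (auto simp: jump_prob_def queue_rate_def)
  have entry_0_2: "P z (0, 2) = 0" if "z \<noteq> (1, 1)" for z
    using that by (cases z) (auto simp: jump_prob_def queue_rate_def)
  have "path_prob (queue_rate lam mu a b) (s # ys @ [s]) = 0" for ys
  proof (cases "s = (0, 2) \<and> (1, 1) \<notin> set ys")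
    case True
    then have "P z s = 0" if "z \<in> set (s # ys @ [s])" for z
      using that entry_0_2[of z] by auto
    then show ?thesis
      by (intro path_prob_eq_0_if_enters[where t = s]) auto
  next
    case False
    then have "(1, 1) \<in> set ys \<or> s \<in> {(0, 1), (1, 1)}"
      using assms by (auto simp: transient_states_def)
    then show ?thesis
      using no_entry by (auto intro: path_prob_eq_0_if_enters)
  qed
  then have "((\<lambda>ys. path_prob (queue_rate lam mu a b) (s # ys @ [s])) has_sum 0) {ys. s \<notin> set ys}"
    by (simp add: has_sum_0)
  then show ?thesis
    unfolding recurrent_state_def using has_sum_unique by fastforce
qed

definition phase_drift :: "nat \<Rightarrow> real" where
  "phase_drift i = (lam - service_rate i) / (lam + service_rate i)"

text \<open>The mean change of the queue length over one cycle of the server away from an empty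
  queue: phase_drift i for each of the phases 1--3, plus the two arrivals ending the vacation.\<close>

definition cycle_drift :: real where
  "cycle_drift = phase_drift 1 + phase_drift 2 + phase_drift 3 + 2"

lemma phase_drift_ge: "-1 \<le> phase_drift i"
proof -
  have "0 < lam + service_rate i"
    using lam_pos service_rate_nonneg[of i] by linarith
  then show ?thesis
    using lam_pos by (simp add: phase_drift_def field_simps)
qed

lemma less_g_fun_iff: "lam < g_fun mu a b lam \<longleftrightarrow> cycle_drift < 0"
proof -
  define D where "D = 1 / (lam + mu) + 1 / (lam + a * mu) + 1 / (lam + b * mu) + 2 / lam"
  have pos: "0 < lam + mu" "0 < lam + a * mu" "0 < lam + b * mu"
    using lam_pos mu_pos a_pos b_pos by (simp_all add: add_pos_pos)
  then have "0 < 1 / (lam + mu)" "0 < 1 / (lam + a * mu)" "0 < 1 / (lam + b * mu)" "0 < 2 / lam"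
    using lam_pos by simp_all
  then have "0 < D"
    unfolding D_def by linarith
  have "cycle_drift = lam * D - (mu / (lam + mu) + a * mu / (lam + a * mu) + b * mu / (lam + b * mu))"
    using pos lam_pos
    by (simp add: cycle_drift_def phase_drift_def phase_rate_def D_def diff_divide_distrib
        distrib_left)
  then show ?thesis
    using \<open>0 < D\<close> by (simp add: g_fun_def D_def[symmetric] pos_less_divide_eq)
qed

end

locale stable_queue = queue +
  assumes cycle_drift_neg: "cycle_drift < 0"
begin

text \<open>The phase offsets telescope the phase drifts, so that the mean change is -1 at every jump
  from phases 1--3 with a nonempty queue; drift_weight is chosen so that the vacation jump also
  decreases the function by 1, and the constant keeps it at least 1.\<close>

definition drift_weight :: real where
  "drift_weight = - 4 / cycle_drift"

definition lyapunov :: "nat \<times> nat \<Rightarrow> real" where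
  "lyapunov = (\<lambda>(n, i). drift_weight * n + (\<Sum>j = i..3. 1 + drift_weight * phase_drift j)
     + 4 * drift_weight + 1)"

lemma drift_weight_pos: "0 < drift_weight"
  using cycle_drift_neg by (simp add: drift_weight_def)

lemma lyapunov_ge_1: "1 \<le> lyapunov x"
proof (cases x)
  case (Pair n i)
  have "real (card {i..3}) \<le> 4"
    by simp
  then have "- (4 * drift_weight) \<le> real (card {i..3}) * - drift_weight"
    using mult_right_mono[of _ 4 drift_weight] drift_weight_pos by simp
  also have "\<dots> \<le> (\<Sum>j = i..3. 1 + drift_weight * phase_drift j)"
  proof (rule sum_bounded_below)
    show "- drift_weight \<le> 1 + drift_weight * phase_drift j" for j
      using mult_left_mono[OF phase_drift_ge[of j], of drift_weight] drift_weight_pos by simp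
  qed
  finally have "- (4 * drift_weight) \<le> (\<Sum>j = i..3. 1 + drift_weight * phase_drift j)" .
  moreover have "0 \<le> drift_weight * n"
    using drift_weight_pos by simp
  ultimately show ?thesis
    by (simp add: Pair lyapunov_def)
qed

lemma lyapunov_level: "lyapunov (m, i) = lyapunov (n, i) + drift_weight * (real m - real n)"
  by (simp add: lyapunov_def algebra_simps)

lemma lyapunov_phase: "i \<le> 3 \<Longrightarrow> lyapunov (n, i) = lyapunov (n, i + 1) + 1 + drift_weight * phase_drift i"
  by (simp add: lyapunov_def sum.atLeast_Suc_atMost)

lemma lyapunov_vacation: "lyapunov (n + 2, 1) = lyapunov (n, 4) - 1"
proof -
  have "lyapunov (n + 2, 1) = lyapunov (n, 4) + 3 + drift_weight * cycle_drift"
    by (simp add: lyapunov_def cycle_drift_def sum.atLeast_Suc_atMost numeral_eq_Suc algebra_simps)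
  then show ?thesis
    using cycle_drift_neg by (simp add: drift_weight_def)
qed

lemma sum_jump_prob_lyapunov_service_phase:
  assumes "i \<in> {1, 2, 3}" and "1 \<le> n"
  shows "(\<Sum>y\<in>queue_targets (n, i). P (n, i) y * lyapunov y) = lyapunov (n, i) - 1"
proof -
  have "0 < service_rate i + lam"
    using lam_pos service_rate_nonneg[of i] by linarith
  have down: "lyapunov (n - 1, i + 1) = lyapunov (n, i + 1) - drift_weight"
    using lyapunov_level[of "n - 1" "i + 1" n] assms(2) by simp
  have up: "lyapunov (n + 1, i + 1) = lyapunov (n, i + 1) + drift_weight"
    using lyapunov_level[of "n + 1" "i + 1" n] by simp
  have "(\<Sum>y\<in>queue_targets (n, i). P (n, i) y * lyapunov y)
      = (service_rate i * lyapunov (n - 1, i + 1) + lam * lyapunov (n + 1, i + 1))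
        / (service_rate i + lam)"
    using assms by (simp add: sum_jump_prob_mult sum_queue_rate_mult total_rate_queue)
  also have "\<dots> = lyapunov (n, i + 1) + drift_weight * phase_drift i"
    unfolding down up phase_drift_def using \<open>0 < service_rate i + lam\<close>
    by (simp add: field_simps)
  also have "\<dots> = lyapunov (n, i) - 1"
    using lyapunov_phase[of i n] assms(1) by auto
  finally show ?thesis .
qed

lemma sum_jump_prob_lyapunov_vacation:
  "(\<Sum>y\<in>queue_targets (n, 4). P (n, 4) y * lyapunov y) = lyapunov (n, 4) - 1"
  using lam_pos lyapunov_vacation[of n]
  by (simp add: sum_jump_prob_mult sum_queue_rate_mult total_rate_queue)

lemma foster_function_lyapunov: "foster_function ({0} \<times> {1, 2, 3}) lyapunov"
  unfolding foster_function_def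
proof (intro conjI allI impI)
  show "0 \<le> lyapunov x" for x
    using lyapunov_ge_1[of x] by linarith
next
  fix x :: "nat \<times> nat"
  assume x: "x \<notin> {0} \<times> {1, 2, 3}"
  obtain n i where x_eq: "x = (n, i)"
    by (cases x)
  consider "i \<in> {1, 2, 3}" | "i = 4" | "i \<notin> {1, 2, 3, 4}"
    by blast
  then show "1 + (\<Sum>y\<in>queue_targets x. P x y * lyapunov y) \<le> lyapunov x"
  proof cases
    case 1
    then have "1 \<le> n"
      using x x_eq by (cases n) auto
    then show ?thesis
      using sum_jump_prob_lyapunov_service_phase[OF 1] x_eq by simp
  next
    case 2
    then show ?thesis
      using sum_jump_prob_lyapunov_vacation x_eq by simp
  next
    case 3
    then show ?thesis
      using lyapunov_ge_1[of x] by (simp add: x_eq queue_targets_def)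
  qed
qed

lemma positive_recurrent_state_queue:
  assumes "s \<in> state_space - transient_states"
  shows "positive_recurrent_state (queue_rate lam mu a b) s"
proof -
  have "edge\<^sup>*\<^sup>* x s" if "x \<in> {0} \<times> {1, 2, 3}" for x
    using boundary_reaches_2_1[OF that] reaches_from_2_1[OF assms] by (rule rtranclp_trans)
  then obtain W where "foster_function {s} W"
    using foster_function_singleton[OF _ foster_function_lyapunov] by blast
  then show ?thesis
    using assms total_rate_queue_pos queue_targets_state_space inverse_total_rate_queue_le
    by (intro positive_recurrent_state_if_foster_function[where S = state_space]) auto
qed

theorem stable_on_state_space: "stable_on (queue_rate lam mu a b) state_space"
proof -
  have "(2, 1) \<in> state_space - transient_states"
    by (simp add: state_space_def transient_states_def)
  then show ?thesis
    unfolding stable_on_def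
    using positive_recurrent_state_queue not_recurrent_transient_state by blast
qed

end

theorem theorem1:
  fixes lam mu a b :: real
  assumes "lam > 0" and "mu > 0" and "0 < b" and "b < a" and "a < 1"
    and "lam < g_fun mu a b lam"
  shows "stable_on (queue_rate lam mu a b) state_space"
proof -
  interpret queue lam mu a b
    using assms by unfold_locales auto
  interpret stable_queue lam mu a b
    using assms less_g_fun_iff by unfold_locales auto
  show ?thesis
    by (rule stable_on_state_space)
qed

end
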